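(* For every $\kappa_G$-NMPG there exist a family of local potential functions $\{\hat\Phi_i\}_{i\in\mathcal N}$ (i.e. satisfying the NMPG identity) and constants $\Phi_{\min},\Phi_{\max}>0$ with $0\le\Phi_{\max}-\Phi_{\min}\le\frac{2n(\kappa_G)}{1-\gamma}$ such that $\Phi_{\min}\le\hat\Phi_i(\xi)\le\Phi_{\max}$ for all $i\in\mathcal N$ and all $\xi\in\Xi$.
   Context: Networked Markov game. There are $n$ agents $\mathcal N=\{1,\dots,n\}$ placed at the nodes of an undirected graph $\mathcal G=(\mathcal N,\mathcal E)$ with graph distance $\mathrm{dist}$. For an integer $\kappa\ge0$, $N_i^\kappa=\{j\in\mathcal N:\mathrm{dist}(i,j)\le\kappa\}$ (so $i\in N_i^\kappa$), $\mathcal N_i=N_i^1$, $-N_i^\kappa=\mathcal N\setminus N_i^\kappa$, and $n(\kappa)=\max_i|N_i^\kappa|$. Agent $i$ has a finite local state space $\mathcal S_i$ and a finite local action space $\mathcal A_i$; $\mathcal S=\prod_i\mathcal S_i$, $\mathcal A=\prod_i\mathcal A_i$, and for $I\subseteq\mathcal N$ we write $s_I,a_I,\mathcal S_I,\mathcal A_I$ for the joint states/actions/spaces of the agents in $I$ (the subscript $-i$ means $\mathcal N\setminus\{i\}$). The dynamics are $\mathcal P(s'\mid s,a)=\prod_i\mathcal P_i(s_i'\mid s_{\mathcal N_i},a_i)$, the initial distribution is $\mu\in\Delta(\mathcal S)$, and $\gamma\in(0,1)$ is a discount factor. Each agent has a reward $r_i:\mathcal S\times\mathcal A\to[0,1]$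 depending only on $(s_{N_i^{\kappa_r}},a_{N_i^{\kappa_r}})$ for a fixed integer $\kappa_r\ge0$. A local policy of agent $i$ is a map $\xi_i:\mathcal S_i\to\Delta(\mathcal A_i)$; $\Xi_i$ is the set of them, $\Xi_I=\prod_{i\in I}\Xi_i$, $\Xi=\Xi_{\mathcal N}$, and a joint policy $\xi=(\xi_1,\dots,\xi_n)$ acts by $\xi(a\mid s)=\prod_i\xi_i(a_i\mid s_i)$. $J_i(\xi)=\sum_{t\ge0}\gamma^t\mathbb E_\xi[r_i(s(t),a(t))]$ with $s(0)\sim\mu$. NMPG: for an integer $\kappa_G\ge0$, the game is a $\kappa_G$-networked Markov potential game ($\kappa_G$-NMPG) if there are functions $\Phi_i:\Xi\to\mathbb R$, $i\in\mathcal N$ (local potentials), such that for every $i\in\mathcal N$, $j\in N_i^{\kappa_G}$, $\xi_j,\xi_j'\in\Xi_j$, $\xi_{-j}\in\Xi_{-j}$: $J_j(\xi_j',\xi_{-j})-J_j(\xi_j,\xi_{-j})=\Phi_i(\xi_j',\xi_{-j})-\Phi_i(\xi_j,\xi_{-j})$. *)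

theory Defs
  imports Complex_Main "HOL-Library.FuncSet"
begin

(* All local states live in a common
   type 's with carriers S i; all local actions in 'a with carriers A i. *)

fun nbhd :: "('i \<Rightarrow> 'i \<Rightarrow> bool) \<Rightarrow> 'i \<Rightarrow> nat \<Rightarrow> 'i set" where
  "nbhd E i 0 = {i}"
| "nbhd E i (Suc k) = nbhd E i k \<union> {j. \<exists>l\<in>nbhd E i k. E l j}"

definition nmax :: "('i::finite \<Rightarrow> 'i \<Rightarrow> bool) \<Rightarrow> nat \<Rightarrow> nat" where
  "nmax E k = Max ((\<lambda>i. card (nbhd E i k)) ` UNIV)"

definition jstates :: "('i \<Rightarrow> 's set) \<Rightarrow> ('i \<Rightarrow> 's) set" where
  "jstates S = Pi\<^sub>E UNIV S"

definition jactions :: "('i \<Rightarrow> 'a set) \<Rightarrow> ('i \<Rightarrow> 'a) set" where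
  "jactions A = Pi\<^sub>E UNIV A"

text \<open>A local policy xi_i : S_i -> Delta(A_i), represented as xi s a = xi_i(a|s),
  zero outside the carriers.\<close>
definition local_policy :: "'s set \<Rightarrow> 'a set \<Rightarrow> ('s \<Rightarrow> 'a \<Rightarrow> real) \<Rightarrow> bool" where
  "local_policy Si Ai xi \<longleftrightarrow>
     (\<forall>s\<in>Si. (\<forall>a. 0 \<le> xi s a) \<and> sum (xi s) Ai = 1) \<and>
     (\<forall>s a. (s \<notin> Si \<or> a \<notin> Ai) \<longrightarrow> xi s a = 0)"

definition policies :: "('i \<Rightarrow> 's set) \<Rightarrow> ('i \<Rightarrow> 'a set) \<Rightarrow> ('i \<Rightarrow> 's \<Rightarrow> 'a \<Rightarrow> real) set" where
  "policies S A = {xi. \<forall>i. local_policy (S i) (A i) (xi i)}"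

definition joint_prob :: "('i::finite \<Rightarrow> 's \<Rightarrow> 'a \<Rightarrow> real) \<Rightarrow> ('i \<Rightarrow> 's) \<Rightarrow> ('i \<Rightarrow> 'a) \<Rightarrow> real" where
  "joint_prob xi s a = (\<Prod>i\<in>UNIV. xi i (s i) (a i))"

text \<open>P(s'|s,a) = prod_i P_i(s'_i | s_{N_i}, a_i); here P i s ai si' = P_i(si'|s,ai).\<close>
definition trans_prob :: "('i::finite \<Rightarrow> ('i \<Rightarrow> 's) \<Rightarrow> 'a \<Rightarrow> 's \<Rightarrow> real) \<Rightarrow> ('i \<Rightarrow> 's) \<Rightarrow> ('i \<Rightarrow> 'a) \<Rightarrow> ('i \<Rightarrow> 's) \<Rightarrow> real" where
  "trans_prob P s a s' = (\<Prod>i\<in>UNIV. P i s (a i) (s' i))"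

fun state_dist :: "('i::finite \<Rightarrow> 's set) \<Rightarrow> ('i \<Rightarrow> 'a set) \<Rightarrow> ('i \<Rightarrow> ('i \<Rightarrow> 's) \<Rightarrow> 'a \<Rightarrow> 's \<Rightarrow> real)
   \<Rightarrow> (('i \<Rightarrow> 's) \<Rightarrow> real) \<Rightarrow> ('i \<Rightarrow> 's \<Rightarrow> 'a \<Rightarrow> real) \<Rightarrow> nat \<Rightarrow> ('i \<Rightarrow> 's) \<Rightarrow> real" where
  "state_dist S A P mu xi 0 = mu"
| "state_dist S A P mu xi (Suc t) = (\<lambda>s'. \<Sum>s\<in>jstates S. state_dist S A P mu xi t s *
       (\<Sum>a\<in>jactions A. joint_prob xi s a * trans_prob P s a s'))"

definition value_fn :: "('i::finite \<Rightarrow> 's set) \<Rightarrow> ('i \<Rightarrow> 'a set) \<Rightarrow> ('i \<Rightarrow> ('i \<Rightarrow> 's) \<Rightarrow> 'a \<Rightarrow> 's \<Rightarrow> real)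
   \<Rightarrow> (('i \<Rightarrow> 's) \<Rightarrow> real) \<Rightarrow> real \<Rightarrow> (('i \<Rightarrow> 's) \<Rightarrow> ('i \<Rightarrow> 'a) \<Rightarrow> real)
   \<Rightarrow> ('i \<Rightarrow> 's \<Rightarrow> 'a \<Rightarrow> real) \<Rightarrow> real" where
  "value_fn S A P mu \<gamma> r xi =
     (\<Sum>t. \<gamma> ^ t * (\<Sum>s\<in>jstates S. state_dist S A P mu xi t s *
           (\<Sum>a\<in>jactions A. joint_prob xi s a * r s a)))"

definition networked_game ::
  "('i::finite \<Rightarrow> 's set) \<Rightarrow> ('i \<Rightarrow> 'a set) \<Rightarrow> ('i \<Rightarrow> 'i \<Rightarrow> bool)
   \<Rightarrow> ('i \<Rightarrow> ('i \<Rightarrow> 's) \<Rightarrow> 'a \<Rightarrow> 's \<Rightarrow> real) \<Rightarrow> (('i \<Rightarrow> 's) \<Rightarrow> real) \<Rightarrow> real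
   \<Rightarrow> ('i \<Rightarrow> ('i \<Rightarrow> 's) \<Rightarrow> ('i \<Rightarrow> 'a) \<Rightarrow> real) \<Rightarrow> nat \<Rightarrow> bool" where
  "networked_game S A E P mu \<gamma> r \<kappa>r \<longleftrightarrow>
     (\<forall>i. finite (S i) \<and> S i \<noteq> {} \<and> finite (A i) \<and> A i \<noteq> {}) \<and>
     (\<forall>i j. E i j \<longleftrightarrow> E j i) \<and>
     (\<forall>i. \<forall>s\<in>jstates S. \<forall>ai\<in>A i. (\<forall>si'. 0 \<le> P i s ai si') \<and> sum (P i s ai) (S i) = 1) \<and>
     (\<forall>i. \<forall>s\<in>jstates S. \<forall>t\<in>jstates S. (\<forall>j\<in>nbhd E i 1. s j = t j) \<longrightarrow> P i s = P i t) \<and>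
     (\<forall>s\<in>jstates S. 0 \<le> mu s) \<and> sum mu (jstates S) = 1 \<and>
     0 < \<gamma> \<and> \<gamma> < 1 \<and>
     (\<forall>i. \<forall>s\<in>jstates S. \<forall>a\<in>jactions A. 0 \<le> r i s a \<and> r i s a \<le> 1) \<and>
     (\<forall>i. \<forall>s\<in>jstates S. \<forall>a\<in>jactions A. \<forall>t\<in>jstates S. \<forall>b\<in>jactions A.
        (\<forall>j\<in>nbhd E i \<kappa>r. s j = t j \<and> a j = b j) \<longrightarrow> r i s a = r i t b)"

definition local_potentials ::
  "('i::finite \<Rightarrow> 's set) \<Rightarrow> ('i \<Rightarrow> 'a set) \<Rightarrow> ('i \<Rightarrow> 'i \<Rightarrow> bool)
   \<Rightarrow> ('i \<Rightarrow> ('i \<Rightarrow> 's) \<Rightarrow> 'a \<Rightarrow> 's \<Rightarrow> real) \<Rightarrow> (('i \<Rightarrow> 's) \<Rightarrow> real) \<Rightarrow> real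
   \<Rightarrow> ('i \<Rightarrow> ('i \<Rightarrow> 's) \<Rightarrow> ('i \<Rightarrow> 'a) \<Rightarrow> real) \<Rightarrow> nat
   \<Rightarrow> ('i \<Rightarrow> ('i \<Rightarrow> 's \<Rightarrow> 'a \<Rightarrow> real) \<Rightarrow> real) \<Rightarrow> bool" where
  "local_potentials S A E P mu \<gamma> r \<kappa>G \<Phi> \<longleftrightarrow>
     (\<forall>i. \<forall>j\<in>nbhd E i \<kappa>G. \<forall>xi\<in>policies S A. \<forall>xj'. local_policy (S j) (A j) xj' \<longrightarrow>
        value_fn S A P mu \<gamma> (r j) (xi(j := xj')) - value_fn S A P mu \<gamma> (r j) xi
        = \<Phi> i (xi(j := xj')) - \<Phi> i xi)"

definition is_NMPG where
  "is_NMPG S A E P mu \<gamma> r \<kappa>G \<longleftrightarrow> (\<exists>\<Phi>. local_potentials S A E P mu \<gamma> r \<kappa>G \<Phi>)"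

end

theory Submission
  imports Defs
begin

text \<open>Every value function lies in \<open>[0, 1/(1-\<gamma>)]\<close>, so a unilateral deviation of an agent
  \<open>j \<in> N\<^sub>i\<^sup>\<kappa>\<close> changes the local potential \<open>\<Phi>\<^sub>i\<close> by at most \<open>1/(1-\<gamma>)\<close>. Replacing the
  policies of \<open>N\<^sub>i\<^sup>\<kappa>\<close> one at a time by a fixed reference policy therefore moves \<open>\<Phi>\<^sub>i\<close> by at
  most \<open>n(\<kappa>)/(1-\<gamma>)\<close>. The value of \<open>\<Phi>\<^sub>i\<close> at this reference depends only on the policies
  outside \<open>N\<^sub>i\<^sup>\<kappa>\<close>, so subtracting it (and adding a constant) preserves the potential
  identity and yields a potential with values in an interval of length \<open>2 n(\<kappa>)/(1-\<gamma>)\<close>.\<close>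

lemma sum_PiE_prod_eq_one:
  fixes f :: "'i::finite \<Rightarrow> 'x \<Rightarrow> real"
  assumes "\<And>i. finite (B i)" "\<And>i. sum (f i) (B i) = 1"
  shows "(\<Sum>g\<in>Pi\<^sub>E UNIV B. \<Prod>i\<in>UNIV. f i (g i)) = 1"
proof -
  have "(\<Sum>g\<in>Pi\<^sub>E UNIV B. \<Prod>i\<in>UNIV. f i (g i)) = (\<Prod>i\<in>UNIV. \<Sum>y\<in>B i. f i y)"
    by (rule prod_sum_PiE[symmetric]) (auto simp: assms)
  then show ?thesis using assms(2) by simp
qed

lemma convex_combination_unit_interval:
  fixes w f :: "'x \<Rightarrow> real"
  assumes "\<And>x. x \<in> X \<Longrightarrow> 0 \<le> w x" "sum w X = 1"
    and "\<And>x. x \<in> X \<Longrightarrow> 0 \<le> f x \<and> f x \<le> 1"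
  shows "0 \<le> (\<Sum>x\<in>X. w x * f x) \<and> (\<Sum>x\<in>X. w x * f x) \<le> 1"
proof
  show "0 \<le> (\<Sum>x\<in>X. w x * f x)"
    using assms by (auto intro!: sum_nonneg)
  have "(\<Sum>x\<in>X. w x * f x) \<le> sum w X"
    using assms by (intro sum_mono) (simp add: mult_left_le)
  then show "(\<Sum>x\<in>X. w x * f x) \<le> 1"
    using assms(2) by simp
qed

lemma discounted_sum_bounds:
  fixes x :: "nat \<Rightarrow> real"
  assumes "0 \<le> \<gamma>" "\<gamma> < 1" "\<And>t. 0 \<le> x t \<and> x t \<le> 1"
  shows "0 \<le> (\<Sum>t. \<gamma> ^ t * x t) \<and> (\<Sum>t. \<gamma> ^ t * x t) \<le> 1 / (1 - \<gamma>)"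
proof -
  have geometric: "summable (\<lambda>t. \<gamma> ^ t)"
    using assms by (simp add: summable_geometric)
  have dominated: "norm (\<gamma> ^ t * x t) \<le> \<gamma> ^ t" for t
    using assms by (simp add: abs_mult mult_left_le)
  have summable: "summable (\<lambda>t. \<gamma> ^ t * x t)"
    by (rule summable_comparison_test[OF _ geometric]) (use dominated in auto)
  have "(\<Sum>t. \<gamma> ^ t * x t) \<le> (\<Sum>t. \<gamma> ^ t)"
    using summable geometric dominated by (intro suminf_le) (auto dest: abs_le_D1)
  moreover have "(\<Sum>t. \<gamma> ^ t) = 1 / (1 - \<gamma>)"
    using assms by (simp add: suminf_geometric)
  moreover have "0 \<le> (\<Sum>t. \<gamma> ^ t * x t)"
    using summable assms by (intro suminf_nonneg) auto
  ultimately show ?thesis by simp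
qed

lemma local_policy_nonneg: "local_policy Si Ai xi \<Longrightarrow> 0 \<le> xi s a"
  unfolding local_policy_def by (cases "s \<in> Si") auto

lemma local_policy_uniform:
  assumes "finite Ai" "Ai \<noteq> {}"
  shows "local_policy Si Ai (\<lambda>s a. if s \<in> Si \<and> a \<in> Ai then 1 / real (card Ai) else 0)"
  using assms unfolding local_policy_def by (auto simp: card_gt_0_iff)

lemma policies_override_on:
  "xi \<in> policies S A \<Longrightarrow> \<forall>j. local_policy (S j) (A j) (\<xi>0 j)
    \<Longrightarrow> override_on xi \<xi>0 B \<in> policies S A"
  unfolding policies_def override_on_def by auto

lemma joint_prob_nonneg: "xi \<in> policies S A \<Longrightarrow> 0 \<le> joint_prob xi s a"
  unfolding joint_prob_def policies_def by (intro prod_nonneg) (blast intro: local_policy_nonneg)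

lemma sum_joint_prob_eq_one:
  assumes "xi \<in> policies S A" "s \<in> jstates S" "\<And>i. finite (A i)"
  shows "(\<Sum>a\<in>jactions A. joint_prob xi s a) = 1"
  unfolding joint_prob_def jactions_def
  using assms unfolding policies_def local_policy_def jstates_def
  by (intro sum_PiE_prod_eq_one) (auto simp: PiE_iff)

context
  fixes S A E P mu \<gamma> r \<kappa>r
  assumes game: "networked_game S A E P mu \<gamma> r \<kappa>r"
begin

lemma finite_local_spaces: "finite (S i)" "finite (A i)" "A i \<noteq> {}"
  and transition_stochastic:
    "s \<in> jstates S \<Longrightarrow> ai \<in> A i \<Longrightarrow> 0 \<le> P i s ai si'"
    "s \<in> jstates S \<Longrightarrow> ai \<in> A i \<Longrightarrow> sum (P i s ai) (S i) = 1"
  and initial_stochastic: "s \<in> jstates S \<Longrightarrow> 0 \<le> mu s" "sum mu (jstates S) = 1"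
  and discount_bounds: "0 < \<gamma>" "\<gamma> < 1"
  and reward_bounds:
    "s \<in> jstates S \<Longrightarrow> a \<in> jactions A \<Longrightarrow> 0 \<le> r i s a \<and> r i s a \<le> 1"
  using game unfolding networked_game_def by blast+

lemma trans_prob_nonneg:
  "s \<in> jstates S \<Longrightarrow> a \<in> jactions A \<Longrightarrow> 0 \<le> trans_prob P s a s'"
  unfolding trans_prob_def jactions_def
  by (intro prod_nonneg transition_stochastic(1)) auto

lemma sum_trans_prob_eq_one:
  assumes "s \<in> jstates S" "a \<in> jactions A"
  shows "(\<Sum>s'\<in>jstates S. trans_prob P s a s') = 1"
  unfolding trans_prob_def jstates_def
  using assms(2) unfolding jactions_def
  by (intro sum_PiE_prod_eq_one finite_local_spaces transition_stochastic(2)[OF assms(1)]) auto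

lemma state_dist_stochastic:
  assumes xi: "xi \<in> policies S A"
  shows "(\<forall>s\<in>jstates S. 0 \<le> state_dist S A P mu xi t s)
    \<and> sum (state_dist S A P mu xi t) (jstates S) = 1"
proof (induction t)
  case 0
  then show ?case using initial_stochastic by simp
next
  case (Suc t)
  let ?d = "state_dist S A P mu xi t"
  let ?w = "\<lambda>s a s'. ?d s * (joint_prob xi s a * trans_prob P s a s')"
  have "sum (state_dist S A P mu xi (Suc t)) (jstates S)
      = (\<Sum>s'\<in>jstates S. \<Sum>s\<in>jstates S. \<Sum>a\<in>jactions A. ?w s a s')"
    by (simp only: state_dist.simps sum_distrib_left)
  also have "\<dots> = (\<Sum>s\<in>jstates S. \<Sum>a\<in>jactions A. \<Sum>s'\<in>jstates S. ?w s a s')"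
    by (subst sum.swap) (intro sum.cong refl sum.swap)
  also have "\<dots> = (\<Sum>s\<in>jstates S. ?d s * (\<Sum>a\<in>jactions A. joint_prob xi s a))"
    by (simp add: sum_distrib_left[symmetric] sum_trans_prob_eq_one)
  also have "\<dots> = 1"
    using Suc sum_joint_prob_eq_one[OF xi _ finite_local_spaces(2)] by simp
  finally show ?case
    using Suc joint_prob_nonneg[OF xi] trans_prob_nonneg
    by (auto intro!: sum_nonneg mult_nonneg_nonneg)
qed

lemma value_fn_bounds:
  assumes xi: "xi \<in> policies S A"
    and reward: "\<And>s a. s \<in> jstates S \<Longrightarrow> a \<in> jactions A \<Longrightarrow> 0 \<le> \<rho> s a \<and> \<rho> s a \<le> 1"
  shows "0 \<le> value_fn S A P mu \<gamma> \<rho> xi \<and> value_fn S A P mu \<gamma> \<rho> xi \<le> 1 / (1 - \<gamma>)"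
proof -
  have expected_reward: "0 \<le> (\<Sum>a\<in>jactions A. joint_prob xi s a * \<rho> s a)
      \<and> (\<Sum>a\<in>jactions A. joint_prob xi s a * \<rho> s a) \<le> 1" if "s \<in> jstates S" for s
    using joint_prob_nonneg[OF xi] sum_joint_prob_eq_one[OF xi that finite_local_spaces(2)]
      reward[OF that]
    by (rule convex_combination_unit_interval) auto
  show ?thesis
    unfolding value_fn_def
  proof (rule discounted_sum_bounds)
    show "0 \<le> \<gamma>" "\<gamma> < 1"
      using discount_bounds by auto
    show "0 \<le> (\<Sum>s\<in>jstates S. state_dist S A P mu xi t s *
        (\<Sum>a\<in>jactions A. joint_prob xi s a * \<rho> s a))
      \<and> (\<Sum>s\<in>jstates S. state_dist S A P mu xi t s *
        (\<Sum>a\<in>jactions A. joint_prob xi s a * \<rho> s a)) \<le> 1" for t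
      using state_dist_stochastic[OF xi, of t] expected_reward
      by (intro convex_combination_unit_interval[where w = "state_dist S A P mu xi t"]) auto
  qed
qed

end

lemma local_potentials_add_independent:
  assumes "local_potentials S A E P mu \<gamma> r \<kappa> \<Phi>"
    and "\<And>i j xi x. j \<in> nbhd E i \<kappa> \<Longrightarrow> c i (xi(j := x)) = c i xi"
  shows "local_potentials S A E P mu \<gamma> r \<kappa> (\<lambda>i xi. \<Phi> i xi + c i xi)"
  using assms unfolding local_potentials_def by simp

lemma local_potential_override_bound:
  assumes game: "networked_game S A E P mu \<gamma> r \<kappa>r"
    and potentials: "local_potentials S A E P mu \<gamma> r \<kappa> \<Phi>"
    and reference: "\<forall>j. local_policy (S j) (A j) (\<xi>0 j)"
    and xi: "xi \<in> policies S A"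
    and "finite B" "B \<subseteq> nbhd E i \<kappa>"
  shows "\<bar>\<Phi> i xi - \<Phi> i (override_on xi \<xi>0 B)\<bar> \<le> real (card B) / (1 - \<gamma>)"
  using \<open>finite B\<close> \<open>B \<subseteq> nbhd E i \<kappa>\<close>
proof (induction B rule: finite_induct)
  case empty
  then show ?case by simp
next
  case (insert b B)
  let ?\<eta> = "override_on xi \<xi>0 B"
  let ?J = "\<lambda>\<xi>. value_fn S A P mu \<gamma> (r b) \<xi>"
  have \<eta>: "?\<eta> \<in> policies S A" "?\<eta>(b := \<xi>0 b) \<in> policies S A"
    using policies_override_on[OF xi reference] reference unfolding policies_def by auto
  have value_bounds: "0 \<le> ?J \<xi> \<and> ?J \<xi> \<le> 1 / (1 - \<gamma>)" if "\<xi> \<in> policies S A" for \<xi>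
    using value_fn_bounds[OF game that reward_bounds[OF game]] .
  have "\<Phi> i (?\<eta>(b := \<xi>0 b)) - \<Phi> i ?\<eta> = ?J (?\<eta>(b := \<xi>0 b)) - ?J ?\<eta>"
    using potentials insert.prems \<eta>(1) reference unfolding local_potentials_def by auto
  with value_bounds[OF \<eta>(1)] value_bounds[OF \<eta>(2)]
  have step: "\<bar>\<Phi> i (?\<eta>(b := \<xi>0 b)) - \<Phi> i ?\<eta>\<bar> \<le> 1 / (1 - \<gamma>)"
    by linarith
  have IH: "\<bar>\<Phi> i xi - \<Phi> i ?\<eta>\<bar> \<le> real (card B) / (1 - \<gamma>)"
    using insert.IH insert.prems by simp
  have card: "real (card (insert b B)) = real (card B) + 1"
    using insert by simp
  show ?case
    unfolding override_on_insert card add_divide_distrib using IH step by linarith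
qed

theorem mainTheorem8:
  fixes S :: "'i::finite \<Rightarrow> 's set" and A :: "'i \<Rightarrow> 'a set"
    and E :: "'i \<Rightarrow> 'i \<Rightarrow> bool"
    and P :: "'i \<Rightarrow> ('i \<Rightarrow> 's) \<Rightarrow> 'a \<Rightarrow> 's \<Rightarrow> real"
    and mu :: "('i \<Rightarrow> 's) \<Rightarrow> real" and \<gamma> :: real
    and r :: "'i \<Rightarrow> ('i \<Rightarrow> 's) \<Rightarrow> ('i \<Rightarrow> 'a) \<Rightarrow> real"
    and \<kappa>r \<kappa>G :: nat
  assumes "networked_game S A E P mu \<gamma> r \<kappa>r"
    and "is_NMPG S A E P mu \<gamma> r \<kappa>G"
  shows "\<exists>\<Phi> \<Phi>min \<Phi>max. local_potentials S A E P mu \<gamma> r \<kappa>G \<Phi> \<and>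
           0 < \<Phi>min \<and> 0 < \<Phi>max \<and> 0 \<le> \<Phi>max - \<Phi>min \<and>
           \<Phi>max - \<Phi>min \<le> 2 * real (nmax E \<kappa>G) / (1 - \<gamma>) \<and>
           (\<forall>i. \<forall>xi\<in>policies S A. \<Phi>min \<le> \<Phi> i xi \<and> \<Phi> i xi \<le> \<Phi>max)"
proof -
  obtain \<Phi> where potentials: "local_potentials S A E P mu \<gamma> r \<kappa>G \<Phi>"
    using assms(2) unfolding is_NMPG_def by blast
  define \<xi>0 where "\<xi>0 j = (\<lambda>s a. if s \<in> S j \<and> a \<in> A j then 1 / real (card (A j)) else 0)" for j
  have reference: "\<forall>j. local_policy (S j) (A j) (\<xi>0 j)"
    unfolding \<xi>0_def using finite_local_spaces[OF assms(1)] by (auto intro: local_policy_uniform)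
  define M where "M = real (nmax E \<kappa>G) / (1 - \<gamma>)"
  define \<Psi> where "\<Psi> i xi = \<Phi> i xi + (M + 1 - \<Phi> i (override_on xi \<xi>0 (nbhd E i \<kappa>G)))" for i xi
  have "local_potentials S A E P mu \<gamma> r \<kappa>G \<Psi>"
    unfolding \<Psi>_def using potentials
    by (rule local_potentials_add_independent)
      (auto simp: override_on_def intro!: arg_cong[of _ _ "\<Phi> _"])
  moreover have "1 \<le> \<Psi> i xi \<and> \<Psi> i xi \<le> 2 * M + 1" if "xi \<in> policies S A" for i xi
  proof -
    have "card (nbhd E i \<kappa>G) \<le> nmax E \<kappa>G"
      unfolding nmax_def by (rule Max_ge) auto
    then have neighbourhood: "real (card (nbhd E i \<kappa>G)) / (1 - \<gamma>) \<le> M"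
      using discount_bounds[OF assms(1)] unfolding M_def by (simp add: divide_right_mono)
    have "\<bar>\<Phi> i xi - \<Phi> i (override_on xi \<xi>0 (nbhd E i \<kappa>G))\<bar>
        \<le> real (card (nbhd E i \<kappa>G)) / (1 - \<gamma>)"
      by (rule local_potential_override_bound[OF assms(1) potentials reference that]) auto
    with neighbourhood show ?thesis unfolding \<Psi>_def by linarith
  qed
  moreover have "0 \<le> M"
    using discount_bounds[OF assms(1)] unfolding M_def by simp
  ultimately show ?thesis
    by (intro exI[of _ \<Psi>] exI[of _ 1] exI[of _ "2 * M + 1"]) (auto simp: M_def)
qed

end
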